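(* Let $A=\sum_{k=0}^Na_k\partial^k\in\mathcal V[\partial]$ be a hereditary differential operator of degree $N$. Then for all $0\le k\le N$, $d(a_k)\le N+1$ (the inequality being vacuous when $a_k$ is a quasiconstant).
   Context: $\mathcal V$ is an algebra of differential functions in one variable $u$ (commutative $\mathbb C$-algebra containing $R=\mathbb C[u,u',\dots]$ with commuting derivations $\partial/\partial u^{(n)}$ extending those of $R$ and $\partial/\partial x$ commuting with them and vanishing on $R$, each element having finitely many nonzero partial derivatives); total derivative $\partial=\sum_nu^{(n+1)}\frac{\partial}{\partial u^{(n)}}+\frac{\partial}{\partial x}$. Standing assumptions: $\mathcal V$ is a normal domain with fraction field $\mathcal K$; $\mathcal C=\ker\partial$ is algebraically closed. The differential order is $d(F)=\max\{n\ge0:\partial F/\partial u^{(n)}\ne0\}$; $F$ is a quasiconstant if this set is empty. $X_F=\sum_nF^{(n)}\frac{\partial}{\partial u^{(n)}}$; $D_F=\sum_n\frac{\partial F}{\partial u^{(n)}}\partial^n$. Differential operators with $\partial a=a\partial+a'$; $X_F$ acts on operators coefficientwise; $\mathcal L_F(L)=X_F(L)-[D_F,L]$. A differential operator $A$ is hereditary if $\mathcal L_{A(G)}(A)=A\,\mathcal L_G(A)$ for all $G\in\mathcal V$. *)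

theory Defs
  imports Complex_Main "HOL-Computational_Algebra.Polynomial" "HOL-Computational_Algebra.Fraction_Field"
begin

text \<open>An algebra of differential functions in one variable u, over the type 'v
 (a commutative domain).  emb is the C-algebra structure map, uu n is u^(n),
 pd n is the partial derivative with respect to u^(n), dx is the partial derivative
 with respect to x.\<close>

record 'v dalg =
  emb :: "complex \<Rightarrow> 'v"
  uu  :: "nat \<Rightarrow> 'v"
  pd  :: "nat \<Rightarrow> 'v \<Rightarrow> 'v"
  dx  :: "'v \<Rightarrow> 'v"

definition is_derivation :: "('v::comm_ring_1 \<Rightarrow> 'v) \<Rightarrow> bool" where
  "is_derivation D \<longleftrightarrow> (\<forall>f g. D (f + g) = D f + D g \<and> D (f * g) = f * D g + g * D f)"

definition diff_alg :: "('v::idom) dalg \<Rightarrow> bool" where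
  "diff_alg V \<longleftrightarrow>
     (\<forall>z w. emb V (z + w) = emb V z + emb V w \<and> emb V (z * w) = emb V z * emb V w) \<and>
     emb V 1 = 1 \<and>
     (\<forall>n. is_derivation (pd V n)) \<and> is_derivation (dx V) \<and>
     (\<forall>n z. pd V n (emb V z) = 0) \<and> (\<forall>z. dx V (emb V z) = 0) \<and>
     (\<forall>n m. pd V n (uu V m) = (if n = m then 1 else 0)) \<and>
     (\<forall>m. dx V (uu V m) = 0) \<and>
     (\<forall>n m f. pd V n (pd V m f) = pd V m (pd V n f)) \<and>
     (\<forall>n f. dx V (pd V n f) = pd V n (dx V f)) \<and>
     (\<forall>f. finite {n. pd V n f \<noteq> 0})"

definition tder :: "('v::idom) dalg \<Rightarrow> 'v \<Rightarrow> 'v" where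
  "tder V f = (\<Sum>n\<in>{n. pd V n f \<noteq> 0}. uu V (Suc n) * pd V n f) + dx V f"

definition quasiconst :: "('v::idom) dalg \<Rightarrow> 'v \<Rightarrow> bool" where
  "quasiconst V f \<longleftrightarrow> (\<forall>n. pd V n f = 0)"

definition dord :: "('v::idom) dalg \<Rightarrow> 'v \<Rightarrow> nat" where
  "dord V f = Max {n. pd V n f \<noteq> 0}"

definition normal_dom :: "('v::idom) dalg \<Rightarrow> bool" where
  "normal_dom V \<longleftrightarrow>
     (\<forall>x :: 'v fract. (\<exists>p :: 'v poly. lead_coeff p = 1 \<and>
          poly (map_poly (\<lambda>a. Fract a 1) p) x = 0) \<longrightarrow> (\<exists>a. x = Fract a 1))"

definition consts_alg_closed :: "('v::idom) dalg \<Rightarrow> bool" where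
  "consts_alg_closed V \<longleftrightarrow>
     (\<forall>p :: 'v poly. (\<forall>i. tder V (coeff p i) = 0) \<and> degree p > 0 \<longrightarrow>
        (\<exists>r. tder V r = 0 \<and> poly p r = 0))"

text \<open>Differential operators sum_k a_k d^k are represented by 'v poly with coeff k = a_k.
 Composition uses d a = a d + a'.\<close>
definition op_mul :: "('v::idom) dalg \<Rightarrow> 'v poly \<Rightarrow> 'v poly \<Rightarrow> 'v poly" where
  "op_mul V L M = (\<Sum>i\<le>degree L. \<Sum>j\<le>degree M. \<Sum>l\<le>i.
      monom (of_nat (i choose l) * coeff L i * (tder V ^^ l) (coeff M j)) (i + j - l))"

definition op_apply :: "('v::idom) dalg \<Rightarrow> 'v poly \<Rightarrow> 'v \<Rightarrow> 'v" where
  "op_apply V L G = (\<Sum>k\<le>degree L. coeff L k * (tder V ^^ k) G)"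

definition evf :: "('v::idom) dalg \<Rightarrow> 'v \<Rightarrow> 'v \<Rightarrow> 'v" where
  "evf V F a = (\<Sum>n\<in>{n. pd V n a \<noteq> 0}. (tder V ^^ n) F * pd V n a)"

definition frechet :: "('v::idom) dalg \<Rightarrow> 'v \<Rightarrow> 'v poly" where
  "frechet V F = (\<Sum>n\<in>{n. pd V n F \<noteq> 0}. monom (pd V n F) n)"

definition lie_op :: "('v::idom) dalg \<Rightarrow> 'v \<Rightarrow> 'v poly \<Rightarrow> 'v poly" where
  "lie_op V F L = map_poly (evf V F) L
      - (op_mul V (frechet V F) L - op_mul V L (frechet V F))"

definition hereditary :: "('v::idom) dalg \<Rightarrow> 'v poly \<Rightarrow> bool" where
  "hereditary V A \<longleftrightarrow>
     (\<forall>G. lie_op V (op_apply V A G) A = op_mul V A (lie_op V G A))"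

end

theory Submission
  imports Defs
begin

text \<open>Let D be the largest differential order of a coefficient of A and suppose D \<ge> N + 2.
  Evaluate the hereditary identity L_(A(G))(A) = A L_G(A) at G = u^(m) for m large, and apply
  d/du^(M), M = m + N + D - 1, to the coefficients of d^p on both sides. Since d^l raises the
  differential order by exactly l, only the two highest partial derivatives of each term
  contribute, the terms involving m cancel, and what remains is
  D a_N' e_p = N a_N (e_p' + e_(p-1)),  where e_k = da_k/du^(D).
  For N > 0 descending induction on p gives e_p = 0 for all p; for N = 0 the same follows because
  d(a_0')/du^(D+1) = e_0. Either way this contradicts the choice of D.\<close>

lemma sum_atMost_extend:
  "d \<le> n \<Longrightarrow> (\<And>i. d < i \<Longrightarrow> i \<le> n \<Longrightarrow> f i = 0) \<Longrightarrow> sum f {..n} = sum f {..(d::nat)}"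
  by (rule sum.mono_neutral_right) auto

lemma sum_triangle_delta:
  "(\<Sum>i\<le>n1. \<Sum>j\<le>n2. \<Sum>l\<le>(i::nat). if i = i1 \<and> j = (j1::nat) \<and> l = l1 then v else 0)
   = (if i1 \<le> n1 \<and> j1 \<le> n2 \<and> l1 \<le> i1 then (v::'a::comm_monoid_add) else 0)"
proof -
  have inner: "(\<Sum>j\<le>n2. \<Sum>l\<le>i. if i = i1 \<and> j = j1 \<and> l = l1 then v else 0)
      = (if i = i1 then if j1 \<le> n2 \<and> l1 \<le> i1 then v else 0 else 0)" for i
  proof (cases "i = i1")
    case True
    then have "(\<Sum>l\<le>i. if i = i1 \<and> j = j1 \<and> l = l1 then v else 0)
        = (if j = j1 then if l1 \<le> i1 then v else 0 else 0)" for j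
      by auto
    with True show ?thesis by simp
  qed simp
  show ?thesis by (simp add: inner)
qed

lemma sum_triangle_delta_Suc:
  "(\<Sum>i\<le>n1. \<Sum>j\<le>n2. \<Sum>l\<le>(i::nat). if i = i1 \<and> Suc j = p \<and> l = l1 then v j else 0)
   = (case p of 0 \<Rightarrow> 0 | Suc j1 \<Rightarrow> if i1 \<le> n1 \<and> j1 \<le> n2 \<and> l1 \<le> i1 then (v j1::'a::comm_monoid_add) else 0)"
proof (cases p)
  case (Suc j1)
  have "(\<Sum>i\<le>n1. \<Sum>j\<le>n2. \<Sum>l\<le>(i::nat). if i = i1 \<and> Suc j = p \<and> l = l1 then v j else 0)
     = (\<Sum>i\<le>n1. \<Sum>j\<le>n2. \<Sum>l\<le>(i::nat). if i = i1 \<and> j = j1 \<and> l = l1 then v j1 else 0)"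
    by (intro sum.cong refl) (auto simp: Suc)
  then show ?thesis by (simp add: sum_triangle_delta Suc)
qed simp

locale diff_algebra =
  fixes V :: "('v::idom) dalg"
  assumes diff_alg: "diff_alg V"
begin

lemma pd_add: "pd V n (f + g) = pd V n f + pd V n g"
  and pd_mult: "pd V n (f * g) = f * pd V n g + g * pd V n f"
  and dx_add: "dx V (f + g) = dx V f + dx V g"
  and dx_mult: "dx V (f * g) = f * dx V g + g * dx V f"
  using diff_alg unfolding diff_alg_def is_derivation_def by blast+

lemma emb_add: "emb V (z + w) = emb V z + emb V w"
  and emb_mult: "emb V (z * w) = emb V z * emb V w"
  and emb_one: "emb V 1 = 1"
  and pd_emb: "pd V n (emb V z) = 0"
  and pd_uu: "pd V n (uu V k) = (if n = k then 1 else 0)"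
  and dx_uu: "dx V (uu V k) = 0"
  and pd_commute: "pd V n (pd V k f) = pd V k (pd V n f)"
  and dx_pd: "dx V (pd V n f) = pd V n (dx V f)"
  and finite_pd_support: "finite {n. pd V n f \<noteq> 0}"
  using diff_alg unfolding diff_alg_def by blast+

lemma pd_0 [simp]: "pd V n 0 = 0"
  using pd_add[of n 0 0] by (metis add.right_neutral add_left_cancel)

lemma pd_diff: "pd V n (f - g) = pd V n f - pd V n g"
  using pd_add[of n "f - g" g] by (simp add: algebra_simps)

lemma pd_sum: "pd V n (sum h S) = (\<Sum>x\<in>S. pd V n (h x))"
  by (induction S rule: infinite_finite_induct) (auto simp: pd_add)

lemma pd_1 [simp]: "pd V n 1 = 0"
  using pd_emb[of n 1] emb_one by simp

lemma pd_of_nat [simp]: "pd V n (of_nat k) = 0"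
  by (induction k) (auto simp: pd_add)

lemma pd_of_nat_mult_mult:
  "pd V n x = 0 \<Longrightarrow> pd V n (of_nat k * x * y) = of_nat k * (x * pd V n y)"
  by (simp add: pd_mult algebra_simps)

lemma emb_of_nat: "emb V (of_nat n) = of_nat n"
proof (induction n)
  case 0
  show ?case using emb_add[of 0 0] by (metis add.right_neutral add_left_cancel of_nat_0)
next
  case (Suc n)
  then show ?case using emb_add[of 1 "of_nat n"] emb_one by simp
qed

lemma of_nat_neq_0: "n \<noteq> 0 \<Longrightarrow> (of_nat n :: 'v) \<noteq> 0"
  using emb_mult[of "of_nat n" "inverse (of_nat n)"] emb_one emb_of_nat[of n] by auto

definition order_below :: "nat \<Rightarrow> 'v \<Rightarrow> bool" where
  "order_below K f \<longleftrightarrow> (\<forall>n\<ge>K. pd V n f = 0)"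

lemma order_belowD: "order_below K f \<Longrightarrow> K \<le> n \<Longrightarrow> pd V n f = 0"
  unfolding order_below_def by blast

lemma order_below_exists: "\<exists>K. order_below K f"
proof -
  obtain K where "{n. pd V n f \<noteq> 0} \<subseteq> {..<K}"
    using finite_pd_support[of f] finite_nat_iff_bounded by blast
  then show ?thesis unfolding order_below_def by (intro exI[of _ K]) force
qed

lemma order_below_mono: "order_below K f \<Longrightarrow> K \<le> K' \<Longrightarrow> order_below K' f"
  unfolding order_below_def by auto

lemma order_below_add: "order_below K f \<Longrightarrow> order_below K g \<Longrightarrow> order_below K (f + g)"
  and order_below_diff: "order_below K f \<Longrightarrow> order_below K g \<Longrightarrow> order_below K (f - g)"
  and order_below_mult: "order_below K f \<Longrightarrow> order_below K g \<Longrightarrow> order_below K (f * g)"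
  and order_below_0: "order_below K 0"
  and order_below_1: "order_below K 1"
  and order_below_of_nat: "order_below K (of_nat k)"
  and order_below_if: "order_below K f \<Longrightarrow> order_below K (if c then f else 0)"
  and order_below_uu: "k < K \<Longrightarrow> order_below K (uu V k)"
  unfolding order_below_def by (simp_all add: pd_add pd_diff pd_mult pd_uu)

lemma order_below_pd: "order_below K f \<Longrightarrow> order_below K (pd V n f)"
  unfolding order_below_def by (simp add: pd_commute[of _ n])

lemma order_below_sum:
  "(\<And>x. x \<in> S \<Longrightarrow> order_below K (h x)) \<Longrightarrow> order_below K (sum h S)"
  unfolding order_below_def by (simp add: pd_sum)

lemma order_below_common:
  obtains K where "order_below K f" "order_below K g"
  using order_below_exists[of f] order_below_exists[of g] order_below_mono
  by (metis max.cobounded1 max.cobounded2)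

lemma sum_pd_eq_lessThan:
  assumes "order_below K f"
  shows "(\<Sum>n\<in>{n. pd V n f \<noteq> 0}. h n * pd V n f) = (\<Sum>n<K. h n * pd V n f)"
  by (rule sum.mono_neutral_left)
    (use assms in \<open>auto simp: order_below_def not_less, meson not_less\<close>)

lemma tder_eq_sum:
  "order_below K f \<Longrightarrow> tder V f = (\<Sum>n<K. uu V (Suc n) * pd V n f) + dx V f"
  unfolding tder_def by (simp add: sum_pd_eq_lessThan)

lemma tder_add: "tder V (f + g) = tder V f + tder V g"
proof -
  obtain K where K: "order_below K f" "order_below K g" by (rule order_below_common)
  then have "order_below K (f + g)" by (rule order_below_add)
  with K show ?thesis
    by (simp add: tder_eq_sum pd_add dx_add distrib_left sum.distrib algebra_simps)
qed

lemma tder_0 [simp]: "tder V 0 = 0"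
  using tder_add[of 0 0] by (metis add.right_neutral add_left_cancel)

lemma tder_pow_0 [simp]: "(tder V ^^ l) 0 = 0"
  by (induction l) auto

lemma tder_uu: "tder V (uu V k) = uu V (Suc k)"
  using tder_eq_sum[OF order_below_uu[of k "Suc k"]] by (simp add: pd_uu dx_uu)

lemma tder_pow_uu: "(tder V ^^ l) (uu V k) = uu V (k + l)"
  by (induction l) (auto simp: tder_uu)

lemma pd_tder:
  "pd V n (tder V f) = tder V (pd V n f) + (if n = 0 then 0 else pd V (n - 1) f)"
proof -
  obtain K where K: "order_below K f" using order_below_exists by blast
  have "pd V n (tder V f) = (\<Sum>j<K. uu V (Suc j) * pd V j (pd V n f)
      + pd V j f * pd V n (uu V (Suc j))) + dx V (pd V n f)"
    by (simp add: tder_eq_sum[OF K] pd_add pd_sum pd_mult pd_commute[of n] dx_pd)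
  also have "\<dots> = tder V (pd V n f) + (\<Sum>j<K. pd V j f * pd V n (uu V (Suc j)))"
    by (simp add: tder_eq_sum[OF order_below_pd[OF K]] sum.distrib)
  also have "(\<Sum>j<K. pd V j f * pd V n (uu V (Suc j)))
      = (\<Sum>j<K. if j = n - 1 \<and> n \<noteq> 0 then pd V j f else 0)"
    by (intro sum.cong) (auto simp: pd_uu)
  also have "\<dots> = (if n = 0 then 0 else pd V (n - 1) f)"
    using order_belowD[OF K, of "n - 1"] by auto
  finally show ?thesis .
qed

lemma order_below_tder_pow: "order_below K f \<Longrightarrow> order_below (K + l) ((tder V ^^ l) f)"
  by (induction l) (auto simp: order_below_def pd_tder)

lemma pd_tder_pow_above:
  "order_below K f \<Longrightarrow> K + l \<le> n \<Longrightarrow> pd V n ((tder V ^^ l) f) = 0"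
  using order_below_tder_pow order_belowD by blast

lemma pd_tder_pow_top:
  assumes "order_below K f" "1 \<le> K"
  shows "pd V (K + l - 1) ((tder V ^^ l) f) = pd V (K - 1) f"
proof (induction l)
  case (Suc l)
  have "pd V (K + Suc l - 1) ((tder V ^^ Suc l) f)
      = tder V (pd V (K + l) ((tder V ^^ l) f)) + pd V (K + l - 1) ((tder V ^^ l) f)"
    using assms(2) by (simp add: pd_tder)
  then show ?case using pd_tder_pow_above[OF assms(1), of l "K + l"] Suc by simp
qed simp

lemma pd_tder_pow_subtop:
  assumes "order_below K f" "2 \<le> K"
  shows "pd V (K + l - 2) ((tder V ^^ l) f)
    = pd V (K - 2) f + of_nat l * tder V (pd V (K - 1) f)"
proof (induction l)
  case (Suc l)
  have "pd V (K + Suc l - 2) ((tder V ^^ Suc l) f)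
      = tder V (pd V (K + l - 1) ((tder V ^^ l) f)) + pd V (K + l - 2) ((tder V ^^ l) f)"
    using assms(2) by (simp add: pd_tder numeral_2_eq_2)
  also have "\<dots> = tder V (pd V (K - 1) f) + (pd V (K - 2) f + of_nat l * tder V (pd V (K - 1) f))"
    using pd_tder_pow_top[OF assms(1)] assms(2) Suc by simp
  finally show ?case by (simp add: algebra_simps)
qed simp

lemma coeff_op_mul: "coeff (op_mul V L P) q = (\<Sum>i\<le>degree L. \<Sum>j\<le>degree P. \<Sum>l\<le>i.
   if i + j - l = q then of_nat (i choose l) * coeff L i * (tder V ^^ l) (coeff P j) else 0)"
  by (simp add: op_mul_def coeff_sum coeff_monom)

lemma coeff_op_mul_le:
  assumes "degree L \<le> n1" "degree P \<le> n2"
  shows "coeff (op_mul V L P) q = (\<Sum>i\<le>n1. \<Sum>j\<le>n2. \<Sum>l\<le>i.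
   if i + j - l = q then of_nat (i choose l) * coeff L i * (tder V ^^ l) (coeff P j) else 0)"
proof -
  let ?t = "\<lambda>i j l. if i + j - l = q
    then of_nat (i choose l) * coeff L i * (tder V ^^ l) (coeff P j) else 0"
  have "(\<Sum>i\<le>n1. \<Sum>j\<le>n2. \<Sum>l\<le>i. ?t i j l) = (\<Sum>i\<le>degree L. \<Sum>j\<le>n2. \<Sum>l\<le>i. ?t i j l)"
    by (rule sum_atMost_extend[OF assms(1)]) (intro sum.neutral ballI, simp add: coeff_eq_0)
  also have "\<dots> = (\<Sum>i\<le>degree L. \<Sum>j\<le>degree P. \<Sum>l\<le>i. ?t i j l)"
    by (intro sum.cong refl sum_atMost_extend[OF assms(2)])
      (intro sum.neutral ballI, simp add: coeff_eq_0)
  finally show ?thesis by (simp add: coeff_op_mul)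
qed

lemma evf_eq_sum: "order_below K f \<Longrightarrow> evf V F f = (\<Sum>n<K. (tder V ^^ n) F * pd V n f)"
  unfolding evf_def by (rule sum_pd_eq_lessThan)

lemma evf_0: "evf V F 0 = 0"
  unfolding evf_def by simp

lemma coeff_frechet: "coeff (frechet V F) n = pd V n F"
  unfolding frechet_def by (simp add: coeff_sum coeff_monom finite_pd_support)

lemma frechet_uu: "frechet V (uu V k) = monom 1 k"
proof -
  have "{n. pd V n (uu V k) \<noteq> 0} = {k}" by (auto simp: pd_uu)
  then show ?thesis unfolding frechet_def by (simp add: pd_uu)
qed

lemma obtain_max_coeff_order:
  assumes "\<not> quasiconst V (coeff P k)"
  obtains D k' where "\<And>j. order_below (Suc D) (coeff P j)" "pd V D (coeff P k') \<noteq> 0"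
    "dord V (coeff P k) \<le> D"
proof -
  define S where "S = (\<Union>j\<le>degree P. {n. pd V n (coeff P j) \<noteq> 0})"
  have "coeff P k \<noteq> 0" using assms by (auto simp: quasiconst_def)
  then have "k \<le> degree P" by (rule le_degree)
  then have "{n. pd V n (coeff P k) \<noteq> 0} \<subseteq> S" by (auto simp: S_def)
  moreover have ne: "{n. pd V n (coeff P k) \<noteq> 0} \<noteq> {}" using assms by (auto simp: quasiconst_def)
  moreover have fin: "finite S" using finite_pd_support by (auto simp: S_def)
  ultimately have "dord V (coeff P k) \<le> Max S" "Max S \<in> S"
    unfolding dord_def by (auto intro: Max_mono Max_in)
  moreover have "order_below (Suc (Max S)) (coeff P j)" for j
    unfolding order_below_def
  proof (intro allI impI)
    fix n assume "Suc (Max S) \<le> n"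
    then have "n \<notin> S" using fin Max_ge not_less_eq_eq by blast
    then show "pd V n (coeff P j) = 0"
      by (cases "j \<le> degree P") (auto simp: S_def coeff_eq_0)
  qed
  ultimately show thesis using that by (auto simp: S_def)
qed

end

locale high_order_coeffs = diff_algebra V for V :: "('v::idom) dalg" +
  fixes A :: "'v poly" and N D :: nat
  assumes degree_A: "degree A = N"
    and order_below_A: "\<And>k. order_below (Suc D) (coeff A k)"
    and order_large: "N + 2 \<le> D"
begin

text \<open>m is large enough that the dependence on u^(n) coming from the probe u^(m) lies strictly
  above that of the coefficients of A.\<close>

definition "m = D + N + 3"
definition "M = m + N + D - 1"
definition "top_pd k = pd V D (coeff A k)"
definition "top_pd_prev p = (case p of 0 \<Rightarrow> 0 | Suc k \<Rightarrow> top_pd k)"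
definition "AG = op_apply V A (uu V m)"
definition "AG_subtop = pd V (m + N - 1) AG"
definition "LGA = lie_op V (uu V m) A"
definition "c_left j = coeff (op_mul V (monom 1 m) A) j"
definition "c_right j = coeff (op_mul V A (monom 1 m)) j"

lemma m_pos: "0 < m"
  by (simp add: m_def)

lemma coeff_A_above: "N < k \<Longrightarrow> coeff A k = 0"
  using degree_A by (simp add: coeff_eq_0)

lemma top_pd_above: "N < k \<Longrightarrow> top_pd k = 0"
  by (simp add: top_pd_def coeff_A_above)

lemma order_below_A_le: "Suc D \<le> K \<Longrightarrow> order_below K (coeff A k)"
  using order_below_A order_below_mono by blast

lemma pd_A_above: "Suc D \<le> n \<Longrightarrow> pd V n (coeff A k) = 0"
  using order_below_A order_belowD by blast

lemma pd_pd_A_above: "Suc D \<le> n \<Longrightarrow> pd V n (pd V k (coeff A j)) = 0"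
  using pd_A_above[of n j] by (simp add: pd_commute[of n k])

lemma AG_eq: "AG = (\<Sum>k\<le>N. coeff A k * uu V (m + k))"
  unfolding AG_def op_apply_def by (simp add: degree_A tder_pow_uu)

lemma order_below_AG: "order_below (m + N + 1) AG"
  unfolding AG_eq
  by (intro order_below_sum order_below_mult order_below_A_le order_below_uu) (auto simp: m_def)

lemma pd_AG_ge: "m \<le> j \<Longrightarrow> pd V j AG = coeff A (j - m)"
proof -
  assume j: "m \<le> j"
  have "pd V j AG = (\<Sum>k\<le>N. if k = j - m then coeff A k else 0)"
    unfolding AG_eq pd_sum
    by (intro sum.cong refl) (use j in \<open>auto simp: pd_mult pd_uu pd_A_above m_def\<close>)
  also have "\<dots> = coeff A (j - m)" using coeff_A_above by auto
  finally show ?thesis .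
qed

lemma pd_AG_top: "pd V (m + N) AG = coeff A N"
  by (simp add: pd_AG_ge)

lemma pd_M_A: "pd V M (coeff A k) = 0"
  using pd_A_above order_large by (simp add: M_def m_def)

lemma pd_M_evf_AG: "pd V M (evf V AG (coeff A p))
    = pd V (D - 1) (coeff A p) * coeff A N
      + top_pd p * (AG_subtop + of_nat D * tder V (coeff A N))"
proof -
  have "pd V M (evf V AG (coeff A p))
      = (\<Sum>n<Suc D. pd V n (coeff A p) * pd V M ((tder V ^^ n) AG))"
    unfolding evf_eq_sum[OF order_below_A] pd_sum
    by (simp add: pd_mult pd_pd_A_above order_large M_def m_def del: sum.lessThan_Suc)
  also have "\<dots> = (\<Sum>n<Suc D. (if n = D - 1 then pd V (D - 1) (coeff A p) * coeff A N else 0)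
      + (if n = D then top_pd p * (AG_subtop + of_nat D * tder V (coeff A N)) else 0))"
  proof (intro sum.cong refl)
    fix n assume n: "n \<in> {..<Suc D}"
    consider "n + 2 \<le> D" | "n = D - 1" | "n = D" using n order_large by fastforce
    then show "pd V n (coeff A p) * pd V M ((tder V ^^ n) AG)
      = (if n = D - 1 then pd V (D - 1) (coeff A p) * coeff A N else 0)
      + (if n = D then top_pd p * (AG_subtop + of_nat D * tder V (coeff A N)) else 0)"
    proof cases
      case 1
      then show ?thesis
        using pd_tder_pow_above[OF order_below_AG, of n M] by (auto simp: M_def)
    next
      case 2
      have "pd V (m + N + 1 + n - 1) ((tder V ^^ n) AG) = pd V (m + N + 1 - 1) AG"
        by (rule pd_tder_pow_top[OF order_below_AG]) simp
      moreover have "m + N + 1 + n - 1 = M" using 2 order_large by (simp add: M_def)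
      ultimately show ?thesis using 2 order_large by (simp add: pd_AG_top)
    next
      case 3
      have "pd V (m + N + 1 + n - 2) ((tder V ^^ n) AG)
          = pd V (m + N + 1 - 2) AG + of_nat n * tder V (pd V (m + N + 1 - 1) AG)"
        by (rule pd_tder_pow_subtop[OF order_below_AG]) (simp add: m_def)
      moreover have "m + N + 1 + n - 2 = M" using 3 order_large by (simp add: M_def)
      ultimately show ?thesis
        using 3 order_large by (simp add: pd_AG_top AG_subtop_def top_pd_def)
    qed
  qed
  also have "\<dots> = pd V (D - 1) (coeff A p) * coeff A N
      + top_pd p * (AG_subtop + of_nat D * tder V (coeff A N))"
    by (simp add: sum.distrib del: sum.lessThan_Suc)
  finally show ?thesis .
qed

lemma pd_M_A_frechet_AG: "pd V M (coeff (op_mul V A (frechet V AG)) p) = 0"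
  unfolding coeff_op_mul pd_sum
proof (intro sum.neutral ballI)
  fix i j l assume i: "i \<in> {..degree A}" and l: "l \<in> {..i}"
  have "pd V M ((tder V ^^ l) (coeff (frechet V AG) j)) = 0"
    unfolding coeff_frechet
    by (rule pd_tder_pow_above[OF order_below_pd[OF order_below_AG]])
      (use i l degree_A order_large in \<open>auto simp: M_def\<close>)
  then show "pd V M (if i + j - l = p then of_nat (i choose l) * coeff A i
      * (tder V ^^ l) (coeff (frechet V AG) j) else 0) = 0"
    by (simp add: pd_of_nat_mult_mult[OF pd_M_A])
qed

lemma pd_M_tder_pow_A:
  "pd V M ((tder V ^^ (m + N)) (coeff A j))
    = pd V (D - 1) (coeff A j) + of_nat (m + N) * tder V (top_pd j)"
  "pd V M ((tder V ^^ (m + N - 1)) (coeff A j)) = top_pd j"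
proof -
  have "Suc D + (m + N) - 2 = M" "Suc D - 2 = D - 1" "Suc D + (m + N - 1) - 1 = M"
    using order_large by (simp_all add: M_def m_def)
  then show "pd V M ((tder V ^^ (m + N)) (coeff A j))
      = pd V (D - 1) (coeff A j) + of_nat (m + N) * tder V (top_pd j)"
    "pd V M ((tder V ^^ (m + N - 1)) (coeff A j)) = top_pd j"
    using pd_tder_pow_subtop[OF order_below_A, of "m + N" j]
      pd_tder_pow_top[OF order_below_A, of "m + N - 1" j] order_large
    by (simp_all add: top_pd_def)
qed

lemma pd_M_frechet_AG_A_term:
  assumes "i \<le> m + N" "l \<le> i"
  shows "pd V M (if i + j - l = p
      then of_nat (i choose l) * coeff (frechet V AG) i * (tder V ^^ l) (coeff A j) else 0)
   = (if i = m + N \<and> j = p \<and> l = m + N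
        then coeff A N * (pd V (D - 1) (coeff A p) + of_nat (m + N) * tder V (top_pd p)) else 0)
   + (if i = m + N \<and> Suc j = p \<and> l = m + N - 1 then of_nat (m + N) * coeff A N * top_pd j else 0)
   + (if i = m + N - 1 \<and> j = p \<and> l = m + N - 1 then AG_subtop * top_pd p else 0)"
proof -
  have "pd V M (pd V i AG) = 0"
    using pd_commute order_belowD[OF order_below_AG] order_large by (simp add: M_def)
  then have lhs: "pd V M (if i + j - l = p
      then of_nat (i choose l) * coeff (frechet V AG) i * (tder V ^^ l) (coeff A j) else 0)
    = (if i + j - l = p
      then of_nat (i choose l) * (pd V i AG * pd V M ((tder V ^^ l) (coeff A j))) else 0)"
    unfolding coeff_frechet by (simp add: pd_of_nat_mult_mult)
  consider "l + 2 \<le> m + N" | "i = m + N" "l = m + N" | "i = m + N" "l = m + N - 1"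
    | "i = m + N - 1" "l = m + N - 1"
    using assms by fastforce
  then show ?thesis
  proof cases
    case 1
    then have "pd V M ((tder V ^^ l) (coeff A j)) = 0"
      by (intro pd_tder_pow_above[OF order_below_A]) (simp add: M_def)
    then show ?thesis unfolding lhs using 1 by auto
  next
    case 2
    then show ?thesis unfolding lhs using pd_AG_top pd_M_tder_pow_A(1) m_pos by auto
  next
    case 3
    then have "i = Suc l" by (simp add: m_def)
    then have "i + j - l = Suc j" "i choose l = i" by simp_all
    with 3 show ?thesis unfolding lhs using pd_AG_top pd_M_tder_pow_A(2) m_pos by auto
  next
    case 4
    then show ?thesis unfolding lhs using pd_M_tder_pow_A(2) m_pos by (auto simp: AG_subtop_def)
  qed
qed

lemma degree_frechet_AG: "degree (frechet V AG) \<le> m + N"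
  by (rule degree_le) (auto simp: coeff_frechet intro: order_belowD[OF order_below_AG])

lemma pd_M_frechet_AG_A: "pd V M (coeff (op_mul V (frechet V AG) A) p)
  = coeff A N * (pd V (D - 1) (coeff A p) + of_nat (m + N) * tder V (top_pd p))
    + of_nat (m + N) * coeff A N * top_pd_prev p + AG_subtop * top_pd p"
proof -
  have "pd V M (coeff (op_mul V (frechet V AG) A) p) = (\<Sum>i\<le>m + N. \<Sum>j\<le>N. \<Sum>l\<le>i.
      (if i = m + N \<and> j = p \<and> l = m + N
        then coeff A N * (pd V (D - 1) (coeff A p) + of_nat (m + N) * tder V (top_pd p)) else 0)
    + (if i = m + N \<and> Suc j = p \<and> l = m + N - 1 then of_nat (m + N) * coeff A N * top_pd j else 0)
    + (if i = m + N - 1 \<and> j = p \<and> l = m + N - 1 then AG_subtop * top_pd p else 0))"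
    unfolding coeff_op_mul_le[OF degree_frechet_AG, of A N, unfolded degree_A, simplified] pd_sum
    by (intro sum.cong refl pd_M_frechet_AG_A_term) auto
  also have "\<dots> = coeff A N * (pd V (D - 1) (coeff A p) + of_nat (m + N) * tder V (top_pd p))
    + of_nat (m + N) * coeff A N * top_pd_prev p + AG_subtop * top_pd p"
    by (simp only: sum.distrib sum_triangle_delta sum_triangle_delta_Suc)
      (cases p, auto simp: top_pd_prev_def top_pd_above coeff_A_above top_pd_def)
  finally show ?thesis .
qed

lemma coeff_LGA: "coeff LGA j = evf V (uu V m) (coeff A j) - (c_left j - c_right j)"
  unfolding LGA_def lie_op_def c_left_def c_right_def
  by (simp add: frechet_uu coeff_map_poly evf_0)

lemma evf_um_eq:
  "evf V (uu V m) (coeff A j) = (\<Sum>n<Suc D. uu V (m + n) * pd V n (coeff A j))"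
  unfolding evf_eq_sum[OF order_below_A] tder_pow_uu ..

lemma order_below_evf_um: "order_below (m + D + 1) (evf V (uu V m) (coeff A j))"
  unfolding evf_um_eq
  by (intro order_below_sum order_below_mult order_below_uu order_below_pd order_below_A_le) auto

lemma pd_evf_um_top: "pd V (m + D) (evf V (uu V m) (coeff A j)) = top_pd j"
proof -
  have "pd V (m + D) (evf V (uu V m) (coeff A j))
      = (\<Sum>n<Suc D. if n = D then pd V n (coeff A j) else 0)"
    unfolding evf_um_eq pd_sum
    by (intro sum.cong refl) (auto simp: pd_mult pd_uu pd_pd_A_above m_def)
  then show ?thesis by (simp add: top_pd_def)
qed

lemma pd_evf_um_subtop:
  "pd V (m + D - 1) (evf V (uu V m) (coeff A j)) = pd V (D - 1) (coeff A j)"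
proof -
  have "pd V (m + D - 1) (evf V (uu V m) (coeff A j))
      = (\<Sum>n<Suc D. if n = D - 1 then pd V n (coeff A j) else 0)"
    unfolding evf_um_eq pd_sum
    by (intro sum.cong refl) (use order_large in \<open>auto simp: pd_mult pd_uu pd_pd_A_above m_def\<close>)
  then show ?thesis by simp
qed

lemma order_below_coeff_monom_1: "order_below K (coeff (monom 1 m) i)"
  by (simp add: coeff_monom order_below_1 order_below_0)

lemma c_left_eq: "c_left j = (\<Sum>i\<le>m. \<Sum>j'\<le>N. \<Sum>l\<le>i. if i + j' - l = j
    then of_nat (i choose l) * coeff (monom 1 m) i * (tder V ^^ l) (coeff A j') else 0)"
  unfolding c_left_def by (rule coeff_op_mul_le) (auto simp: degree_A degree_monom_le)

lemma order_below_c_left: "order_below (m + D + 1) (c_left j)"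
  unfolding c_left_eq
  by (intro order_below_sum order_below_if order_below_mult order_below_of_nat
      order_below_coeff_monom_1 order_below_mono[OF order_below_tder_pow[OF order_below_A]]) auto

lemma order_below_c_right: "order_below (m + D - 1) (c_right j)"
  unfolding c_right_def coeff_op_mul
  by (intro order_below_sum order_below_if order_below_mult order_below_of_nat order_below_A_le
      order_below_mono[OF order_below_tder_pow[OF order_below_coeff_monom_1[of 0]]])
    (use order_large degree_A in \<open>auto simp: m_def\<close>)

lemma pd_c_left_top_term:
  assumes "i \<le> m" "l \<le> i"
  shows "pd V (m + D) (if i + j' - l = j
      then of_nat (i choose l) * coeff (monom 1 m) i * (tder V ^^ l) (coeff A j') else 0)
    = (if i = m \<and> j' = j \<and> l = m then top_pd j else 0)"
proof (cases "i = m \<and> l = m")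
  case True
  have "pd V (Suc D + l - 1) ((tder V ^^ l) (coeff A j')) = pd V (Suc D - 1) (coeff A j')"
    by (rule pd_tder_pow_top[OF order_below_A]) simp
  then show ?thesis using True by (auto simp: coeff_monom pd_mult top_pd_def add.commute)
next
  case False
  then have "i \<noteq> m \<or> pd V (m + D) ((tder V ^^ l) (coeff A j')) = 0"
    using assms by (auto intro: pd_tder_pow_above[OF order_below_A])
  then show ?thesis using False by (auto simp: coeff_monom pd_mult)
qed

lemma pd_c_left_top: "pd V (m + D) (c_left j) = top_pd j"
proof -
  have "pd V (m + D) (c_left j)
      = (\<Sum>i\<le>m. \<Sum>j'\<le>N. \<Sum>l\<le>i. if i = m \<and> j' = j \<and> l = m then top_pd j else 0)"
    unfolding c_left_eq pd_sum by (intro sum.cong refl pd_c_left_top_term) auto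
  also have "\<dots> = top_pd j" by (simp add: sum_triangle_delta top_pd_above)
  finally show ?thesis .
qed

lemma pd_c_left_subtop_term:
  assumes "i \<le> m" "l \<le> i"
  shows "pd V (m + D - 1) (if i + j' - l = j
      then of_nat (i choose l) * coeff (monom 1 m) i * (tder V ^^ l) (coeff A j') else 0)
    = (if i = m \<and> j' = j \<and> l = m
        then pd V (D - 1) (coeff A j) + of_nat m * tder V (top_pd j) else 0)
     + (if i = m \<and> Suc j' = j \<and> l = m - 1 then of_nat m * top_pd j' else 0)"
proof (cases "i = m")
  case False
  then show ?thesis by (simp add: coeff_monom)
next
  case i: True
  consider "l + 2 \<le> m" | "l = m" | "l = m - 1" using assms i by fastforce
  then show ?thesis
  proof cases
    case 1
    then have "pd V (m + D - 1) ((tder V ^^ l) (coeff A j')) = 0"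
      by (intro pd_tder_pow_above[OF order_below_A]) simp
    then show ?thesis using 1 i by (auto simp: coeff_monom pd_mult)
  next
    case 2
    have "pd V (Suc D + l - 2) ((tder V ^^ l) (coeff A j'))
        = pd V (Suc D - 2) (coeff A j') + of_nat l * tder V (pd V (Suc D - 1) (coeff A j'))"
      by (rule pd_tder_pow_subtop[OF order_below_A]) (use order_large in simp)
    moreover have "Suc D + l - 2 = m + D - 1" using 2 order_large by (simp add: m_def)
    ultimately show ?thesis using 2 i order_large
      by (auto simp: coeff_monom pd_mult top_pd_def m_def)
  next
    case 3
    have "pd V (Suc D + l - 1) ((tder V ^^ l) (coeff A j')) = pd V (Suc D - 1) (coeff A j')"
      by (rule pd_tder_pow_top[OF order_below_A]) simp
    moreover have "Suc D + l - 1 = m + D - 1" using 3 order_large by (simp add: m_def)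
    moreover have "i = Suc l" using 3 i by (simp add: m_def)
    then have "i + j' - l = Suc j'" "i choose l = i" by simp_all
    ultimately show ?thesis using 3 i by (auto simp: coeff_monom pd_mult top_pd_def)
  qed
qed

lemma pd_c_left_subtop: "pd V (m + D - 1) (c_left j)
    = pd V (D - 1) (coeff A j) + of_nat m * tder V (top_pd j) + of_nat m * top_pd_prev j"
proof -
  have "pd V (m + D - 1) (c_left j) = (\<Sum>i\<le>m. \<Sum>j'\<le>N. \<Sum>l\<le>i.
       (if i = m \<and> j' = j \<and> l = m
          then pd V (D - 1) (coeff A j) + of_nat m * tder V (top_pd j) else 0)
     + (if i = m \<and> Suc j' = j \<and> l = m - 1 then of_nat m * top_pd j' else 0))"
    unfolding c_left_eq pd_sum by (intro sum.cong refl pd_c_left_subtop_term) auto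
  also have "\<dots> = pd V (D - 1) (coeff A j) + of_nat m * tder V (top_pd j)
      + of_nat m * top_pd_prev j"
    by (simp only: sum.distrib sum_triangle_delta sum_triangle_delta_Suc)
      (cases j, auto simp: top_pd_prev_def top_pd_above coeff_A_above top_pd_def)
  finally show ?thesis .
qed

lemma order_below_LGA: "order_below (m + D + 1) (coeff LGA j)"
  unfolding coeff_LGA
  by (intro order_below_diff order_below_evf_um order_below_c_left
      order_below_mono[OF order_below_c_right]) simp

lemma pd_LGA_top: "pd V (m + D) (coeff LGA j) = 0"
  unfolding coeff_LGA using order_belowD[OF order_below_c_right, of "m + D"]
  by (simp add: pd_diff pd_evf_um_top pd_c_left_top)

lemma pd_LGA_subtop:
  "pd V (m + D - 1) (coeff LGA j) = - (of_nat m * (tder V (top_pd j) + top_pd_prev j))"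
  unfolding coeff_LGA pd_diff pd_evf_um_subtop pd_c_left_subtop
    order_belowD[OF order_below_c_right order_refl]
  by (simp add: algebra_simps)

lemma pd_M_A_LGA_term:
  assumes "i \<le> N" "l \<le> i"
  shows "pd V M (if i + j - l = p
      then of_nat (i choose l) * coeff A i * (tder V ^^ l) (coeff LGA j) else 0)
   = (if i = N \<and> j = p \<and> l = N
      then - (coeff A N * (of_nat m * (tder V (top_pd p) + top_pd_prev p))) else 0)"
proof -
  have lhs: "pd V M (if i + j - l = p
      then of_nat (i choose l) * coeff A i * (tder V ^^ l) (coeff LGA j) else 0)
    = (if i + j - l = p
      then of_nat (i choose l) * (coeff A i * pd V M ((tder V ^^ l) (coeff LGA j))) else 0)"
    by (simp add: pd_of_nat_mult_mult[OF pd_M_A])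
  consider "l + 2 \<le> N" | "l + 1 = N" | "l = N" using assms by fastforce
  then show ?thesis
  proof cases
    case 1
    then have "pd V M ((tder V ^^ l) (coeff LGA j)) = 0"
      by (intro pd_tder_pow_above[OF order_below_LGA]) (simp add: M_def)
    then show ?thesis unfolding lhs using 1 by auto
  next
    case 2
    have "pd V (m + D + 1 + l - 1) ((tder V ^^ l) (coeff LGA j))
        = pd V (m + D + 1 - 1) (coeff LGA j)"
      by (rule pd_tder_pow_top[OF order_below_LGA]) simp
    moreover have "m + D + 1 + l - 1 = M" using 2 by (simp add: M_def)
    ultimately show ?thesis unfolding lhs using 2 pd_LGA_top by auto
  next
    case 3
    have "pd V (m + D + 1 + l - 2) ((tder V ^^ l) (coeff LGA j))
        = pd V (m + D + 1 - 2) (coeff LGA j)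
          + of_nat l * tder V (pd V (m + D + 1 - 1) (coeff LGA j))"
      by (rule pd_tder_pow_subtop[OF order_below_LGA]) (simp add: m_def)
    moreover have "m + D + 1 + l - 2 = M" using 3 order_large by (simp add: M_def m_def)
    ultimately show ?thesis unfolding lhs using 3 assms pd_LGA_top pd_LGA_subtop by auto
  qed
qed

lemma pd_M_A_LGA: "pd V M (coeff (op_mul V A LGA) p)
    = - (coeff A N * (of_nat m * (tder V (top_pd p) + top_pd_prev p)))"
proof -
  have "pd V M (coeff (op_mul V A LGA) p) = (\<Sum>i\<le>N. \<Sum>j\<le>degree LGA + p. \<Sum>l\<le>i.
      if i = N \<and> j = p \<and> l = N
        then - (coeff A N * (of_nat m * (tder V (top_pd p) + top_pd_prev p))) else 0)"
    unfolding coeff_op_mul_le[of A N LGA "degree LGA + p", unfolded degree_A, simplified] pd_sum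
    by (intro sum.cong refl pd_M_A_LGA_term) auto
  also have "\<dots> = - (coeff A N * (of_nat m * (tder V (top_pd p) + top_pd_prev p)))"
    by (simp only: sum_triangle_delta) simp
  finally show ?thesis .
qed

lemma hereditary_top_pd_eq:
  assumes "hereditary V A"
  shows "of_nat D * tder V (coeff A N) * top_pd p
    = of_nat N * coeff A N * (tder V (top_pd p) + top_pd_prev p)"
proof -
  have "lie_op V AG A = op_mul V A LGA"
    using assms unfolding hereditary_def AG_def LGA_def by blast
  then have "pd V M (coeff (lie_op V AG A) p) = pd V M (coeff (op_mul V A LGA) p)" by simp
  moreover have "coeff (lie_op V AG A) p = evf V AG (coeff A p)
      - (coeff (op_mul V (frechet V AG) A) p - coeff (op_mul V A (frechet V AG)) p)"
    unfolding lie_op_def by (simp add: coeff_map_poly evf_0)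
  ultimately have "pd V (D - 1) (coeff A p) * coeff A N
        + top_pd p * (AG_subtop + of_nat D * tder V (coeff A N))
      - (coeff A N * (pd V (D - 1) (coeff A p) + of_nat (m + N) * tder V (top_pd p))
        + of_nat (m + N) * coeff A N * top_pd_prev p + AG_subtop * top_pd p)
     = - (coeff A N * (of_nat m * (tder V (top_pd p) + top_pd_prev p)))"
    by (simp add: pd_diff pd_M_evf_AG pd_M_frechet_AG_A pd_M_A_frechet_AG pd_M_A_LGA)
  then show ?thesis unfolding of_nat_add by algebra
qed

lemma hereditary_top_pd_eq_0:
  assumes "hereditary V A"
  shows "top_pd k = 0"
proof (cases "N = 0")
  case True
  show ?thesis
  proof (cases k)
    case 0
    have "pd V (Suc D) (tder V (coeff A 0)) = top_pd 0"
      using pd_tder[of "Suc D"] pd_A_above[of "Suc D"] by (simp add: top_pd_def)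
    moreover have "of_nat D * tder V (coeff A 0) * top_pd 0 = 0"
      using hereditary_top_pd_eq[OF assms, of 0] True by (simp add: top_pd_prev_def)
    moreover have "(of_nat D :: 'v) \<noteq> 0" using order_large by (intro of_nat_neq_0) simp
    ultimately show ?thesis using 0 by auto
  qed (use True top_pd_above in simp)
next
  case False
  show ?thesis
  proof (cases "A = 0")
    case True
    then show ?thesis unfolding top_pd_def by simp
  next
    case A: False
    have lead: "coeff A N \<noteq> 0" using A degree_A by auto
    have "(of_nat N :: 'v) \<noteq> 0" using False by (rule of_nat_neq_0)
    show ?thesis
    proof (induction "N + 1 - k" arbitrary: k)
      case 0
      then show ?case by (simp add: top_pd_above)
    next
      case (Suc t)
      then have "top_pd (Suc k) = 0" by simp
      then have "of_nat N * coeff A N * top_pd k = 0"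
        using hereditary_top_pd_eq[OF assms, of "Suc k"] by (simp add: top_pd_prev_def)
      with lead \<open>of_nat N \<noteq> 0\<close> show ?case by simp
    qed
  qed
qed

end

theorem proposition2p20:
  fixes V :: "('v::idom) dalg" and A :: "'v poly" and N :: nat
  assumes "diff_alg V"
    and "normal_dom V"
    and "consts_alg_closed V"
    and "hereditary V A"
    and "degree A = N"
  shows "\<forall>k \<le> N. \<not> quasiconst V (coeff A k) \<longrightarrow> dord V (coeff A k) \<le> N + 1"
proof (intro allI impI)
  fix k assume "\<not> quasiconst V (coeff A k)"
  interpret diff_algebra V by unfold_locales (rule assms(1))
  obtain D k' where order_A: "\<And>j. order_below (Suc D) (coeff A j)"
    and top: "pd V D (coeff A k') \<noteq> 0" and "dord V (coeff A k) \<le> D"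
    using obtain_max_coeff_order[OF \<open>\<not> quasiconst V (coeff A k)\<close>] by blast
  show "dord V (coeff A k) \<le> N + 1"
  proof (rule ccontr)
    assume "\<not> dord V (coeff A k) \<le> N + 1"
    with \<open>dord V (coeff A k) \<le> D\<close> have "N + 2 \<le> D" by simp
    then interpret high_order_coeffs V A N D
      using assms(5) order_A by unfold_locales
    show False
      using hereditary_top_pd_eq_0[OF assms(4), of k'] top by (simp add: top_pd_def)
  qed
qed

end
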